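(* Let $I(\emptyset)$ denote the quiver with no vertices and no edges, and let $C$ be a quiver. A quiver homomorphism $\varphi : I(\emptyset) \to C$ is mono-essential if and only if $|V(C)|\le 1$ and $|E(C)|\le 1$.
   Context: A quiver is a quadruple $(V,E,\sigma,\tau)$ with $V,E$ sets and $\sigma,\tau : E \to V$ functions. A quiver homomorphism $G \to H$ is a pair $(\phi_V,\phi_E)$ of functions on vertices and edges commuting with sources and targets; composition is componentwise. A quiver homomorphism is a monomorphism (monic) in the category $\mathbf{Quiv}$ if and only if both its vertex and edge maps are injective. A monic homomorphism $\varphi : A \to B$ is mono-essential if for every quiver $C'$ and homomorphism $\alpha : B \to C'$, if $\alpha\circ\varphi$ is monic then $\alpha$ is monic. *)

theory Defs
  imports Main
begin

record ('v, 'e) quiver =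
  verts :: "'v set"
  edges :: "'e set"
  src :: "'e \<Rightarrow> 'v"
  tgt :: "'e \<Rightarrow> 'v"

definition wf_quiver :: "('v, 'e) quiver \<Rightarrow> bool" where
  "wf_quiver Q \<longleftrightarrow> (\<forall>e\<in>edges Q. src Q e \<in> verts Q \<and> tgt Q e \<in> verts Q)"

definition quiver_hom ::
  "('v1, 'e1) quiver \<Rightarrow> ('v2, 'e2) quiver \<Rightarrow> ('v1 \<Rightarrow> 'v2) \<times> ('e1 \<Rightarrow> 'e2) \<Rightarrow> bool" where
  "quiver_hom G H f \<longleftrightarrow>
     (\<forall>v\<in>verts G. fst f v \<in> verts H) \<and>
     (\<forall>e\<in>edges G. snd f e \<in> edges H) \<and>
     (\<forall>e\<in>edges G. fst f (src G e) = src H (snd f e) \<and> fst f (tgt G e) = tgt H (snd f e))"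

definition hom_comp ::
  "('v2 \<Rightarrow> 'v3) \<times> ('e2 \<Rightarrow> 'e3) \<Rightarrow> ('v1 \<Rightarrow> 'v2) \<times> ('e1 \<Rightarrow> 'e2) \<Rightarrow> ('v1 \<Rightarrow> 'v3) \<times> ('e1 \<Rightarrow> 'e3)" where
  "hom_comp g f = (fst g \<circ> fst f, snd g \<circ> snd f)"

definition quiver_monic ::
  "('v1, 'e1) quiver \<Rightarrow> ('v2, 'e2) quiver \<Rightarrow> ('v1 \<Rightarrow> 'v2) \<times> ('e1 \<Rightarrow> 'e2) \<Rightarrow> bool" where
  "quiver_monic G H f \<longleftrightarrow> quiver_hom G H f \<and> inj_on (fst f) (verts G) \<and> inj_on (snd f) (edges G)"

text \<open>Mono-essential, with test quivers C' ranging over quivers with vertex type 'c and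
  edge type 'd (the type parameters are passed explicitly).\<close>
definition mono_essential ::
  "'c itself \<Rightarrow> 'd itself \<Rightarrow> ('v1, 'e1) quiver \<Rightarrow> ('v2, 'e2) quiver \<Rightarrow>
     ('v1 \<Rightarrow> 'v2) \<times> ('e1 \<Rightarrow> 'e2) \<Rightarrow> bool" where
  "mono_essential (_ :: 'c itself) (_ :: 'd itself) A B \<phi> \<longleftrightarrow>
     quiver_monic A B \<phi> \<and>
     (\<forall>(C' :: ('c, 'd) quiver) (\<alpha> :: ('v2 \<Rightarrow> 'c) \<times> ('e2 \<Rightarrow> 'd)).
        wf_quiver C' \<longrightarrow> quiver_hom B C' \<alpha> \<longrightarrow>
        quiver_monic A C' (hom_comp \<alpha> \<phi>) \<longrightarrow> quiver_monic B C' \<alpha>)"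

definition empty_quiver :: "('v, 'e) quiver" where
  "empty_quiver = \<lparr>verts = {}, edges = {}, src = (\<lambda>_. undefined), tgt = (\<lambda>_. undefined)\<rparr>"

end

theory Submission
  imports Defs
begin

text \<open>Any embedding of the empty quiver is monic. Every quiver maps to the one-vertex quiver
  with one loop, and such a map is injective only on a subsingleton; conversely every map out
  of a quiver with at most one vertex and at most one edge is injective.\<close>

lemma inj_on_const_iff_subsingleton:
  "inj_on (\<lambda>_. c) S \<longleftrightarrow> finite S \<and> card S \<le> 1"
proof
  assume "inj_on (\<lambda>_. c) S"
  then have "S \<subseteq> {x}" if "x \<in> S" for x
    using that by (auto simp: inj_on_def)
  then have "S = {} \<or> (\<exists>x. S = {x})"
    by blast
  then show "finite S \<and> card S \<le> 1"
    by auto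
qed (auto simp: inj_on_def card_le_Suc0_iff_eq)

lemma inj_on_subsingleton:
  assumes "finite S" "card S \<le> 1"
  shows "inj_on f S"
  using assms by (auto simp: inj_on_def card_le_Suc0_iff_eq)

lemma quiver_monic_empty_quiver: "quiver_monic empty_quiver C f"
  by (simp add: quiver_monic_def quiver_hom_def empty_quiver_def)

definition loop_quiver :: "('v, 'e) quiver" where
  "loop_quiver = \<lparr>verts = {undefined}, edges = {undefined},
                  src = (\<lambda>_. undefined), tgt = (\<lambda>_. undefined)\<rparr>"

lemma wf_loop_quiver: "wf_quiver loop_quiver"
  by (simp add: loop_quiver_def wf_quiver_def)

lemma quiver_hom_to_loop_quiver: "quiver_hom G loop_quiver (\<lambda>_. undefined, \<lambda>_. undefined)"
  by (simp add: loop_quiver_def quiver_hom_def)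

lemma quiver_monic_to_loop_quiver_iff:
  "quiver_monic G (loop_quiver :: ('c, 'd) quiver) (\<lambda>_. undefined, \<lambda>_. undefined) \<longleftrightarrow>
     finite (verts G) \<and> card (verts G) \<le> 1 \<and> finite (edges G) \<and> card (edges G) \<le> 1"
  by (simp add: quiver_monic_def quiver_hom_to_loop_quiver inj_on_const_iff_subsingleton)

lemma quiver_monic_if_subsingleton:
  assumes "quiver_hom G H f"
    and "finite (verts G)" "card (verts G) \<le> 1" "finite (edges G)" "card (edges G) \<le> 1"
  shows "quiver_monic G H f"
  using assms by (simp add: quiver_monic_def inj_on_subsingleton)

theorem mainTheorem3:
  fixes C :: "('v, 'e) quiver" and \<phi> :: "('a \<Rightarrow> 'v) \<times> ('b \<Rightarrow> 'e)"
  assumes "wf_quiver C"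
    and "quiver_hom (empty_quiver :: ('a, 'b) quiver) C \<phi>"
  shows "mono_essential TYPE('c) TYPE('d) (empty_quiver :: ('a, 'b) quiver) C \<phi> \<longleftrightarrow>
           (finite (verts C) \<and> card (verts C) \<le> 1 \<and> finite (edges C) \<and> card (edges C) \<le> 1)"
proof
  assume "mono_essential TYPE('c) TYPE('d) (empty_quiver :: ('a, 'b) quiver) C \<phi>"
  then have "quiver_monic C (loop_quiver :: ('c, 'd) quiver) (\<lambda>_. undefined, \<lambda>_. undefined)"
    unfolding mono_essential_def
    using wf_loop_quiver quiver_hom_to_loop_quiver quiver_monic_empty_quiver by blast
  then show "finite (verts C) \<and> card (verts C) \<le> 1 \<and> finite (edges C) \<and> card (edges C) \<le> 1"
    by (simp add: quiver_monic_to_loop_quiver_iff)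
next
  assume "finite (verts C) \<and> card (verts C) \<le> 1 \<and> finite (edges C) \<and> card (edges C) \<le> 1"
  then show "mono_essential TYPE('c) TYPE('d) (empty_quiver :: ('a, 'b) quiver) C \<phi>"
    unfolding mono_essential_def
    by (simp add: quiver_monic_empty_quiver quiver_monic_if_subsingleton)
qed

end
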